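(* Let $(G,Y)$ be a finite $C$-group with $Y=C_1\sqcup\dots\sqcup C_m$, and let $Y'=C_1\sqcup\dots\sqcup C_k$ be ample. Let $G'$ be the group with generators $u_y$ ($y\in Y'$) and relations $u_z^{-1}u_yu_z=u_{z^{-1}yz}$ for all $y,z\in Y'$ (where $z^{-1}yz$ is computed in $G$), and let $i_*:G'\to G$ be the homomorphism $u_y\mapsto y$. Then the restriction of $i_*$ to $[G',G']$ is an epimorphism onto $[G,G]$.
   Context: A finite $C$-group is a pair $(G,Y)$ with $Y$ a finite conjugation-invariant subset of the group $G$, $1\notin Y$, such that $G$ has a presentation with generators the elements of $Y$ and defining relations all of the form $z^{-1}yz=y'$ ($y,y',z\in Y$). $Y=C_1\sqcup\dots\sqcup C_m$ is the decomposition into conjugacy classes of $G$. A union $Y'=C_1\sqcup\dots\sqcup C_k$ of some of these classes is ample if any two elements of $Y$ that are conjugate in $G$ are conjugate by an element of the subgroup generated by $Y'$. *)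

theory Defs
  imports "HOL-Algebra.Algebra"
begin

text \<open>A word over an alphabet is a list of letters with a sign: (a, False) stands
  for the generator a, (a, True) for its inverse.\<close>

type_synonym 'a word = "('a \<times> bool) list"

inductive pres_eq :: "'a word set \<Rightarrow> 'a word \<Rightarrow> 'a word \<Rightarrow> bool" for R where
  refl: "pres_eq R w w"
| sym: "pres_eq R u v \<Longrightarrow> pres_eq R v u"
| trans: "pres_eq R u v \<Longrightarrow> pres_eq R v w \<Longrightarrow> pres_eq R u w"
| cancel: "pres_eq R (u @ [(a, b), (a, \<not> b)] @ v) (u @ v)"
| relator: "r \<in> R \<Longrightarrow> pres_eq R (u @ r @ v) (u @ v)"

definition pres_words :: "'a set \<Rightarrow> 'a word set" where
  "pres_words S = lists (S \<times> UNIV)"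

definition pres_class :: "'a set \<Rightarrow> 'a word set \<Rightarrow> 'a word \<Rightarrow> 'a word set" where
  "pres_class S R w = {v \<in> pres_words S. pres_eq R w v}"

definition presented_group :: "'a set \<Rightarrow> 'a word set \<Rightarrow> 'a word set monoid" where
  "presented_group S R =
     \<lparr> carrier = pres_class S R ` pres_words S,
       monoid.mult = (\<lambda>A B. pres_class S R ((SOME a. a \<in> A) @ (SOME b. b \<in> B))),
       one = pres_class S R [] \<rparr>"

definition pres_gen :: "'a set \<Rightarrow> 'a word set \<Rightarrow> 'a \<Rightarrow> 'a word set" where
  "pres_gen S R s = pres_class S R [(s, False)]"

definition conj_relator :: "'a \<Rightarrow> 'a \<Rightarrow> 'a \<Rightarrow> 'a word" where
  "conj_relator y z y' = [(z, True), (y, False), (z, False), (y', True)]"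

text \<open>(G,Y) is a finite C-group: Y a finite conjugation-invariant subset of G not containing 1,
  and G has a presentation with generators the elements of Y and defining relations all of
  the form z^{-1} y z = y' (y, y', z in Y); i.e. for some set T of such triples, the
  homomorphism from the presented group sending u_y to y is an isomorphism onto G.\<close>

definition finite_C_group :: "('a, 'b) monoid_scheme \<Rightarrow> 'a set \<Rightarrow> bool" where
  "finite_C_group G Y \<longleftrightarrow>
     group G \<and> finite Y \<and> Y \<subseteq> carrier G \<and> \<one>\<^bsub>G\<^esub> \<notin> Y \<and>
     (\<forall>g \<in> carrier G. \<forall>y \<in> Y. inv\<^bsub>G\<^esub> g \<otimes>\<^bsub>G\<^esub> y \<otimes>\<^bsub>G\<^esub> g \<in> Y) \<and>
     (\<exists>T \<subseteq> Y \<times> Y \<times> Y.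
        \<exists>h \<in> iso (presented_group Y ((\<lambda>(y, z, y'). conj_relator y z y') ` T)) G.
          \<forall>y \<in> Y. h (pres_gen Y ((\<lambda>(y, z, y'). conj_relator y z y') ` T) y) = y)"

definition union_of_classes :: "('a, 'b) monoid_scheme \<Rightarrow> 'a set \<Rightarrow> 'a set \<Rightarrow> bool" where
  "union_of_classes G Y Y' \<longleftrightarrow> Y' \<subseteq> Y \<and>
     (\<forall>g \<in> carrier G. \<forall>y \<in> Y'. inv\<^bsub>G\<^esub> g \<otimes>\<^bsub>G\<^esub> y \<otimes>\<^bsub>G\<^esub> g \<in> Y')"

definition ample :: "('a, 'b) monoid_scheme \<Rightarrow> 'a set \<Rightarrow> 'a set \<Rightarrow> bool" where
  "ample G Y Y' \<longleftrightarrow> union_of_classes G Y Y' \<and>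
     (\<forall>y1 \<in> Y. \<forall>y2 \<in> Y. (\<exists>g \<in> carrier G. inv\<^bsub>G\<^esub> g \<otimes>\<^bsub>G\<^esub> y1 \<otimes>\<^bsub>G\<^esub> g = y2) \<longrightarrow>
        (\<exists>g \<in> generate G Y'. inv\<^bsub>G\<^esub> g \<otimes>\<^bsub>G\<^esub> y1 \<otimes>\<^bsub>G\<^esub> g = y2))"

definition G_prime_relators :: "('a, 'b) monoid_scheme \<Rightarrow> 'a set \<Rightarrow> 'a word set" where
  "G_prime_relators G Y' =
     {conj_relator y z (inv\<^bsub>G\<^esub> z \<otimes>\<^bsub>G\<^esub> y \<otimes>\<^bsub>G\<^esub> z) | y z. y \<in> Y' \<and> z \<in> Y'}"

definition G_prime :: "('a, 'b) monoid_scheme \<Rightarrow> 'a set \<Rightarrow> 'a word set monoid" where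
  "G_prime G Y' = presented_group Y' (G_prime_relators G Y')"

end

theory Submission
  imports Defs
begin

(*
  Let H be the subgroup generated by Y'; it is normal, and i maps G' onto H, so
  i [G',G'] = [H,H]. For a in G and y in Y, the element a y a^-1 is a G-conjugate of y lying
  in Y, so ampleness writes it as k y k^-1 with k in H; hence [a,y] = [k,y]. Taking y in Y'
  shows [a,h] in [H,H] for all h in H; then [a,y] = [k,y] in [H,H] for all y in Y; and since Y
  generates G, every commutator of G lies in the normal subgroup [H,H].
*)

lemma pres_eq_append_context:
  "pres_eq R u v \<Longrightarrow> pres_eq R (x @ u @ y) (x @ v @ y)"
proof (induction rule: pres_eq.induct)
  case (refl w)
  show ?case by (rule pres_eq.refl)
next
  case (sym u v)
  show ?case using sym.IH by (rule pres_eq.sym)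
next
  case (trans u v w)
  show ?case using trans.IH by (rule pres_eq.trans)
next
  case (cancel u a b v)
  show ?case using pres_eq.cancel[of R "x @ u" a b "v @ y"] by simp
next
  case (relator r u v)
  show ?case using pres_eq.relator[OF relator, of "x @ u" "v @ y"] by simp
qed

lemma pres_eq_append:
  assumes "pres_eq R u u'" and "pres_eq R v v'"
  shows "pres_eq R (u @ v) (u' @ v')"
  using pres_eq_append_context[OF assms(1), of "[]" v] pres_eq_append_context[OF assms(2), of u' "[]"]
  by (metis pres_eq.trans append_Nil append_Nil2)

lemma pres_class_eq: "pres_eq R u v \<Longrightarrow> pres_class S R u = pres_class S R v"
  unfolding pres_class_def by (auto intro: pres_eq.trans pres_eq.sym)

lemma some_in_pres_class:
  assumes "w \<in> pres_words S"
  shows "(SOME a. a \<in> pres_class S R w) \<in> pres_words S \<and> pres_eq R w (SOME a. a \<in> pres_class S R w)"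
proof -
  have "w \<in> pres_class S R w" using assms unfolding pres_class_def by (auto intro: pres_eq.refl)
  hence "(SOME a. a \<in> pres_class S R w) \<in> pres_class S R w" by (rule someI)
  thus ?thesis unfolding pres_class_def by auto
qed

lemma pres_words_append: "u \<in> pres_words S \<Longrightarrow> v \<in> pres_words S \<Longrightarrow> u @ v \<in> pres_words S"
  unfolding pres_words_def by auto

lemma presented_group_carrier: "carrier (presented_group S R) = pres_class S R ` pres_words S"
  by (simp add: presented_group_def)

lemma presented_group_one: "\<one>\<^bsub>presented_group S R\<^esub> = pres_class S R []"
  by (simp add: presented_group_def)

lemma presented_group_mult:
  assumes "u \<in> pres_words S" and "v \<in> pres_words S"
  shows "pres_class S R u \<otimes>\<^bsub>presented_group S R\<^esub> pres_class S R v = pres_class S R (u @ v)"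
proof -
  have "pres_eq R (u @ v) ((SOME a. a \<in> pres_class S R u) @ (SOME b. b \<in> pres_class S R v))"
    using some_in_pres_class[OF assms(1), of R] some_in_pres_class[OF assms(2), of R]
    by (blast intro: pres_eq_append)
  then show ?thesis
    unfolding presented_group_def using pres_class_eq[of R "u @ v" _ S] by simp
qed

definition inv_word :: "'a word \<Rightarrow> 'a word" where
  "inv_word w = rev (map (\<lambda>(a, b). (a, \<not> b)) w)"

lemma inv_word_inv_word [simp]: "inv_word (inv_word w) = w"
  unfolding inv_word_def by (induction w) auto

lemma inv_word_in_pres_words: "w \<in> pres_words S \<Longrightarrow> inv_word w \<in> pres_words S"
  unfolding inv_word_def pres_words_def by auto

lemma pres_eq_append_inv_word: "pres_eq R (w @ inv_word w) []"
proof (induction w)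
  case Nil
  then show ?case by (simp add: inv_word_def pres_eq.refl)
next
  case (Cons x w)
  obtain a b where x: "x = (a, b)" by fastforce
  have "pres_eq R ([(a, b)] @ (w @ inv_word w) @ [(a, \<not> b)]) ([(a, b)] @ [] @ [(a, \<not> b)])"
    by (rule pres_eq_append_context[OF Cons.IH])
  moreover have "pres_eq R ([] @ [(a, b), (a, \<not> b)] @ []) ([] @ [])"
    by (rule pres_eq.cancel)
  ultimately show ?case by (auto simp: x inv_word_def intro: pres_eq.trans)
qed

lemma pres_eq_inv_word_append: "pres_eq R (inv_word w @ w) []"
  using pres_eq_append_inv_word[of R "inv_word w"] by simp

lemma presented_group_is_group: "group (presented_group S R)"
proof (rule groupI)
  fix x y assume "x \<in> carrier (presented_group S R)" "y \<in> carrier (presented_group S R)"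
  then show "x \<otimes>\<^bsub>presented_group S R\<^esub> y \<in> carrier (presented_group S R)"
    by (auto simp: presented_group_carrier presented_group_mult pres_words_append)
next
  show "\<one>\<^bsub>presented_group S R\<^esub> \<in> carrier (presented_group S R)"
    by (auto simp: presented_group_carrier presented_group_one pres_words_def)
next
  fix x y z
  assume "x \<in> carrier (presented_group S R)" "y \<in> carrier (presented_group S R)"
    "z \<in> carrier (presented_group S R)"
  then show "x \<otimes>\<^bsub>presented_group S R\<^esub> y \<otimes>\<^bsub>presented_group S R\<^esub> z =
             x \<otimes>\<^bsub>presented_group S R\<^esub> (y \<otimes>\<^bsub>presented_group S R\<^esub> z)"
    by (auto simp: presented_group_carrier presented_group_mult pres_words_append)
next
  fix x assume "x \<in> carrier (presented_group S R)"
  then obtain u where u: "u \<in> pres_words S" "x = pres_class S R u"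
    by (auto simp: presented_group_carrier)
  have "[] \<in> pres_words S" by (simp add: pres_words_def)
  then show "\<one>\<^bsub>presented_group S R\<^esub> \<otimes>\<^bsub>presented_group S R\<^esub> x = x"
    using u by (simp add: presented_group_mult presented_group_one)
  have "pres_class S R (inv_word u) \<otimes>\<^bsub>presented_group S R\<^esub> x = \<one>\<^bsub>presented_group S R\<^esub>"
    using u inv_word_in_pres_words[OF u(1)] pres_class_eq[OF pres_eq_inv_word_append]
    by (simp add: presented_group_mult presented_group_one)
  moreover have "pres_class S R (inv_word u) \<in> carrier (presented_group S R)"
    using u inv_word_in_pres_words by (auto simp: presented_group_carrier)
  ultimately show "\<exists>y\<in>carrier (presented_group S R). y \<otimes>\<^bsub>presented_group S R\<^esub> x = \<one>\<^bsub>presented_group S R\<^esub>"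
    by blast
qed

lemma presented_group_inv:
  assumes "w \<in> pres_words S"
  shows "inv\<^bsub>presented_group S R\<^esub> (pres_class S R w) = pres_class S R (inv_word w)"
proof -
  interpret group "presented_group S R" by (rule presented_group_is_group)
  have w': "inv_word w \<in> pres_words S" using assms by (rule inv_word_in_pres_words)
  have "pres_class S R (inv_word w) \<otimes>\<^bsub>presented_group S R\<^esub> pres_class S R w
          = \<one>\<^bsub>presented_group S R\<^esub>"
    using presented_group_mult[OF w' assms] pres_class_eq[OF pres_eq_inv_word_append]
    by (simp add: presented_group_one)
  moreover have "pres_class S R w \<in> carrier (presented_group S R)"
    and "pres_class S R (inv_word w) \<in> carrier (presented_group S R)"
    using assms w' by (simp_all add: presented_group_carrier)
  ultimately show ?thesis by (rule inv_equality)
qed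

lemma pres_gen_in_carrier: "s \<in> S \<Longrightarrow> pres_gen S R s \<in> carrier (presented_group S R)"
  by (auto simp: pres_gen_def presented_group_carrier pres_words_def)

lemma presented_group_generate:
  "generate (presented_group S R) (pres_gen S R ` S) = carrier (presented_group S R)"
proof -
  interpret P: group "presented_group S R" by (rule presented_group_is_group)
  have words: "pres_class S R w \<in> generate (presented_group S R) (pres_gen S R ` S)"
    if "w \<in> pres_words S" for w
    using that
  proof (induction w)
    case Nil
    show ?case using generate.one[of "presented_group S R"] by (simp add: presented_group_one)
  next
    case (Cons x w)
    obtain s b where x: "x = (s, b)" by fastforce
    have s: "s \<in> S" and w: "w \<in> pres_words S" and xw: "[x] \<in> pres_words S"
      using Cons.prems x by (auto simp: pres_words_def)
    have gen: "pres_gen S R s \<in> generate (presented_group S R) (pres_gen S R ` S)"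
      using s by (intro generate.incl imageI)
    have letter: "pres_class S R [x] \<in> generate (presented_group S R) (pres_gen S R ` S)"
    proof (cases b)
      case False
      then show ?thesis using gen by (simp add: x pres_gen_def)
    next
      case True
      have gen_word: "[(s, False)] \<in> pres_words S" using s by (simp add: pres_words_def)
      have "inv\<^bsub>presented_group S R\<^esub> (pres_gen S R s) = pres_class S R [x]"
        unfolding pres_gen_def presented_group_inv[OF gen_word] by (simp add: x True inv_word_def)
      moreover have "inv\<^bsub>presented_group S R\<^esub> (pres_gen S R s)
                       \<in> generate (presented_group S R) (pres_gen S R ` S)"
        using s by (intro generate.inv imageI)
      ultimately show ?thesis by simp
    qed
    have "pres_class S R (x # w) = pres_class S R [x] \<otimes>\<^bsub>presented_group S R\<^esub> pres_class S R w"
      using presented_group_mult[OF xw w, of R] by simp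
    then show ?case
      using generate.eng[OF letter Cons.IH[OF w]] by (simp only:)
  qed
  have "pres_gen S R ` S \<subseteq> carrier (presented_group S R)"
    using pres_gen_in_carrier by (rule image_subsetI)
  then have "generate (presented_group S R) (pres_gen S R ` S) \<subseteq> carrier (presented_group S R)"
    by (rule P.generate_incl)
  moreover have "carrier (presented_group S R) \<subseteq> generate (presented_group S R) (pres_gen S R ` S)"
    unfolding presented_group_carrier using words by (rule image_subsetI)
  ultimately show ?thesis by (rule subset_antisym)
qed

lemma hom_presented_group_image:
  assumes "group G" and h: "h \<in> hom (presented_group S R) G"
    and h_gen: "\<And>s. s \<in> S \<Longrightarrow> h (pres_gen S R s) = s"
  shows "h ` carrier (presented_group S R) = generate G S"
proof -
  interpret group_hom "presented_group S R" G h
    using assms(1) h presented_group_is_group by (intro group_hom.intro group_hom_axioms.intro)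
  have gens: "pres_gen S R ` S \<subseteq> carrier (presented_group S R)"
    using pres_gen_in_carrier by (rule image_subsetI)
  have "h ` carrier (presented_group S R) = h ` generate (presented_group S R) (pres_gen S R ` S)"
    by (simp only: presented_group_generate)
  also have "\<dots> = generate G (h ` pres_gen S R ` S)"
    by (rule generate_img[OF gens, symmetric])
  also have "h ` pres_gen S R ` S = S"
    using h_gen by (simp add: image_image)
  finally show ?thesis .
qed

lemma finite_C_group_generate:
  assumes "finite_C_group G Y"
  shows "generate G Y = carrier G"
proof -
  obtain R h where "h \<in> iso (presented_group Y R) G" and "\<forall>y \<in> Y. h (pres_gen Y R y) = y"
    and "group G"
    using assms unfolding finite_C_group_def by blast
  then show ?thesis
    using hom_presented_group_image[of G h Y R] by (auto simp: iso_def bij_betw_def)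
qed

context group
begin

lemma inv_mult_cancel_left: "x \<in> carrier G \<Longrightarrow> y \<in> carrier G \<Longrightarrow> inv x \<otimes> (x \<otimes> y) = y"
  by (simp flip: m_assoc)

lemma mult_inv_cancel_left: "x \<in> carrier G \<Longrightarrow> y \<in> carrier G \<Longrightarrow> x \<otimes> (inv x \<otimes> y) = y"
  by (simp flip: m_assoc)

lemma commutator_in_normal_mult_right:
  assumes N: "N \<lhd> G" and carr: "x \<in> carrier G" "y1 \<in> carrier G" "y2 \<in> carrier G"
    and "x \<otimes> y1 \<otimes> inv x \<otimes> inv y1 \<in> N" and "x \<otimes> y2 \<otimes> inv x \<otimes> inv y2 \<in> N"
  shows "x \<otimes> (y1 \<otimes> y2) \<otimes> inv x \<otimes> inv (y1 \<otimes> y2) \<in> N"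
proof -
  interpret N: normal N G by (rule N)
  have "y1 \<otimes> (x \<otimes> y2 \<otimes> inv x \<otimes> inv y2) \<otimes> inv y1 \<in> N"
    using assms by (intro N.inv_op_closed2) auto
  with assms(5) have "(x \<otimes> y1 \<otimes> inv x \<otimes> inv y1) \<otimes> (y1 \<otimes> (x \<otimes> y2 \<otimes> inv x \<otimes> inv y2) \<otimes> inv y1) \<in> N"
    by (rule N.m_closed)
  also have "(x \<otimes> y1 \<otimes> inv x \<otimes> inv y1) \<otimes> (y1 \<otimes> (x \<otimes> y2 \<otimes> inv x \<otimes> inv y2) \<otimes> inv y1)
             = x \<otimes> (y1 \<otimes> y2) \<otimes> inv x \<otimes> inv (y1 \<otimes> y2)"
    using carr by (simp add: m_assoc inv_mult_group inv_mult_cancel_left mult_inv_cancel_left)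
  finally show ?thesis .
qed

lemma commutator_in_normal_swap:
  assumes N: "N \<lhd> G" and carr: "x \<in> carrier G" "y \<in> carrier G"
    and "x \<otimes> y \<otimes> inv x \<otimes> inv y \<in> N"
  shows "y \<otimes> x \<otimes> inv y \<otimes> inv x \<in> N"
proof -
  interpret N: normal N G by (rule N)
  have "inv (x \<otimes> y \<otimes> inv x \<otimes> inv y) \<in> N" using assms(4) by (rule N.m_inv_closed)
  also have "inv (x \<otimes> y \<otimes> inv x \<otimes> inv y) = y \<otimes> x \<otimes> inv y \<otimes> inv x"
    using carr by (simp add: m_assoc inv_mult_group)
  finally show ?thesis .
qed

lemma commutator_in_normal_inv_right:
  assumes N: "N \<lhd> G" and carr: "x \<in> carrier G" "y \<in> carrier G"
    and "x \<otimes> y \<otimes> inv x \<otimes> inv y \<in> N"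
  shows "x \<otimes> inv y \<otimes> inv x \<otimes> inv (inv y) \<in> N"
proof -
  interpret N: normal N G by (rule N)
  have "inv y \<otimes> (y \<otimes> x \<otimes> inv y \<otimes> inv x) \<otimes> inv (inv y) \<in> N"
    using commutator_in_normal_swap[OF assms] carr by (intro N.inv_op_closed2) auto
  also have "inv y \<otimes> (y \<otimes> x \<otimes> inv y \<otimes> inv x) \<otimes> inv (inv y) = x \<otimes> inv y \<otimes> inv x \<otimes> inv (inv y)"
    using carr by (simp add: m_assoc inv_mult_cancel_left)
  finally show ?thesis .
qed

lemma commutator_in_normal_generate:
  assumes N: "N \<lhd> G" and x: "x \<in> carrier G" and A: "A \<subseteq> carrier G"
    and gens: "\<And>a. a \<in> A \<Longrightarrow> x \<otimes> a \<otimes> inv x \<otimes> inv a \<in> N"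
    and y: "y \<in> generate G A"
  shows "x \<otimes> y \<otimes> inv x \<otimes> inv y \<in> N"
  using y
proof (induction rule: generate.induct)
  case one
  interpret N: normal N G by (rule N)
  show ?case using x by simp
next
  case (incl a)
  then show ?case by (rule gens)
next
  case (inv a)
  then show ?case using commutator_in_normal_inv_right[OF N x _ gens] A by auto
next
  case (eng y1 y2)
  then show ?case
    using commutator_in_normal_mult_right[OF N x] generate_in_carrier[OF A] by auto
qed

end

lemma (in group) union_of_classes_generate_normal:
  assumes "union_of_classes G Y Y'" and "Y \<subseteq> carrier G"
  shows "generate G Y' \<lhd> G"
proof -
  have Y': "Y' \<subseteq> carrier G" and conj: "\<forall>g \<in> carrier G. \<forall>y \<in> Y'. inv g \<otimes> y \<otimes> g \<in> Y'"
    using assms unfolding union_of_classes_def by auto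
  show ?thesis
  proof (rule normal_generateI[OF Y'])
    fix y g assume "y \<in> Y'" and "g \<in> carrier G"
    then show "g \<otimes> y \<otimes> inv g \<in> Y'" using conj inv_closed by (metis inv_inv)
  qed
qed

lemma (in group) ample_commutator:
  assumes "ample G Y Y'" and "Y \<subseteq> carrier G"
    and conj: "\<forall>g \<in> carrier G. \<forall>y \<in> Y. inv g \<otimes> y \<otimes> g \<in> Y"
    and a: "a \<in> carrier G" and y: "y \<in> Y"
  obtains k where "k \<in> generate G Y'" "a \<otimes> y \<otimes> inv a \<otimes> inv y = k \<otimes> y \<otimes> inv k \<otimes> inv y"
proof -
  have Y': "Y' \<subseteq> carrier G"
    using assms(1,2) unfolding ample_def union_of_classes_def by auto
  have "a \<otimes> y \<otimes> inv a \<in> Y" and "inv (inv a) \<otimes> y \<otimes> inv a = a \<otimes> y \<otimes> inv a"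
    using conj a y by (metis inv_closed inv_inv)+
  then obtain k where k: "k \<in> generate G Y'" and conj_k: "inv k \<otimes> y \<otimes> k = a \<otimes> y \<otimes> inv a"
    using assms(1) a y unfolding ample_def by (metis inv_closed)
  have kc: "k \<in> carrier G" using generate_in_carrier[OF Y'] k by blast
  show ?thesis
  proof
    show "inv k \<in> generate G Y'"
      using subgroup.m_inv_closed[OF generate_is_subgroup[OF Y'] k] .
    show "a \<otimes> y \<otimes> inv a \<otimes> inv y = inv k \<otimes> y \<otimes> inv (inv k) \<otimes> inv y"
      using conj_k kc by simp
  qed
qed

lemma (in group) derived_generate_ample:
  assumes Y: "Y \<subseteq> carrier G"
    and conj: "\<forall>g \<in> carrier G. \<forall>y \<in> Y. inv g \<otimes> y \<otimes> g \<in> Y"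
    and gen: "generate G Y = carrier G"
    and ample: "ample G Y Y'"
  shows "derived G (generate G Y') = derived G (carrier G)"
proof -
  define H where "H = generate G Y'"
  define N where "N = derived G H"
  have Y': "Y' \<subseteq> carrier G"
    using ample Y unfolding ample_def union_of_classes_def by auto
  have H: "H \<lhd> G"
    unfolding H_def using ample Y by (intro union_of_classes_generate_normal) (auto simp: ample_def)
  then have N: "N \<lhd> G"
    unfolding N_def by (rule derived_is_normal)
  have H_carrier: "H \<subseteq> carrier G"
    using H by (simp add: normal_def subgroup.subset)
  have derived_H: "h1 \<otimes> h2 \<otimes> inv h1 \<otimes> inv h2 \<in> N" if "h1 \<in> H" "h2 \<in> H" for h1 h2
    unfolding N_def derived_def using that by (intro generate.incl) blast
  have commutator_H: "a \<otimes> h \<otimes> inv a \<otimes> inv h \<in> N" if a: "a \<in> carrier G" and "h \<in> H" for a h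
  proof (rule commutator_in_normal_generate[OF N a Y'])
    fix y assume "y \<in> Y'"
    moreover obtain k where "k \<in> H" "a \<otimes> y \<otimes> inv a \<otimes> inv y = k \<otimes> y \<otimes> inv k \<otimes> inv y"
      using ample_commutator[OF ample Y conj a] \<open>y \<in> Y'\<close> ample
      unfolding H_def ample_def union_of_classes_def by blast
    ultimately show "a \<otimes> y \<otimes> inv a \<otimes> inv y \<in> N"
      using derived_H generate.incl[of y Y' G] unfolding H_def by simp
  qed (use \<open>h \<in> H\<close> H_def in simp)
  have commutator_Y: "a \<otimes> y \<otimes> inv a \<otimes> inv y \<in> N" if a: "a \<in> carrier G" and y: "y \<in> Y" for a y
  proof -
    obtain k where k: "k \<in> H" and eq: "a \<otimes> y \<otimes> inv a \<otimes> inv y = k \<otimes> y \<otimes> inv k \<otimes> inv y"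
      using ample_commutator[OF ample Y conj a y] unfolding H_def .
    have "y \<otimes> k \<otimes> inv y \<otimes> inv k \<in> N"
      using commutator_H y Y k by blast
    then show ?thesis
      unfolding eq using commutator_in_normal_swap[OF N] k y Y H_carrier by blast
  qed
  have "a \<otimes> b \<otimes> inv a \<otimes> inv b \<in> N" if "a \<in> carrier G" "b \<in> carrier G" for a b
    using commutator_in_normal_generate[OF N _ Y commutator_Y] that gen by blast
  then have "derived G (carrier G) \<subseteq> N"
    unfolding derived_def using N by (intro generate_subgroup_incl) (auto simp: normal_def)
  moreover have "N \<subseteq> derived G (carrier G)"
    unfolding N_def using H_carrier by (rule mono_derived)
  ultimately show ?thesis
    unfolding N_def H_def by blast
qed

theorem proposition2p19:
  fixes G :: "('a, 'b) monoid_scheme" and Y Y' :: "'a set" and i :: "'a word set \<Rightarrow> 'a"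
  assumes "finite_C_group G Y"
    and "ample G Y Y'"
    and "i \<in> hom (G_prime G Y') G"
    and "\<forall>y \<in> Y'. i (pres_gen Y' (G_prime_relators G Y') y) = y"
  shows "i ` derived (G_prime G Y') (carrier (G_prime G Y')) = derived G (carrier G)"
proof -
  have G: "group G" and Y: "Y \<subseteq> carrier G"
    and conj: "\<forall>g \<in> carrier G. \<forall>y \<in> Y. inv\<^bsub>G\<^esub> g \<otimes>\<^bsub>G\<^esub> y \<otimes>\<^bsub>G\<^esub> g \<in> Y"
    using assms(1) unfolding finite_C_group_def by auto
  have i: "group_hom (G_prime G Y') G i"
    using G assms(3) presented_group_is_group unfolding G_prime_def
    by (intro group_hom.intro group_hom_axioms.intro)
  have image: "i ` carrier (G_prime G Y') = generate G Y'"
    using hom_presented_group_image[OF G] assms(3,4) unfolding G_prime_def by blast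
  have "i ` derived (G_prime G Y') (carrier (G_prime G Y')) = derived G (generate G Y')"
    using group_hom.derived_img[OF i, of "carrier (G_prime G Y')"] image by simp
  also have "\<dots> = derived G (carrier G)"
    using group.derived_generate_ample[OF G Y conj finite_C_group_generate[OF assms(1)] assms(2)] .
  finally show ?thesis .
qed

end
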